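(* Let $F$ be a finite field with $q$ elements, let $C\subseteq F^n$ be a balanced code with information length $d$, and let $C^{\le\delta}$ be the set of codewords of $C$ whose relative weight is at most $\delta$. If $0\le\delta\le 1-q^{-1}$, then $|C^{\le\delta}|\le q^{d\,h_q(\delta)}$.
   Context: The relative weight of $\mathbf{a}\in F^n$ is $\mathrm{w}(\mathbf{a})/n$ where $\mathrm{w}$ is Hamming weight. For $I=\{1,\dots,n\}$ and a subset $I'=\{i_1<\dots<i_d\}$, the projection $F^I\to F^{I'}$ sends $(a_1,\dots,a_n)$ to $(a_{i_1},\dots,a_{i_d})$. A subset $C\subseteq F^n$ is a balanced code with information length $d$ if there exist subsets $I_1,\dots,I_s$ of $I$ (repetitions allowed), each of cardinality $d$, and an integer $t$ such that (i) every index $i\in I$ lies in exactly $t$ of the sets $I_j$; (ii) for each $j$, the projection $F^I\to F^{I_j}$ maps $C$ bijectively onto $F^{I_j}$. The $q$-ary entropy is $h_q(x)=x\log_q(q-1)-x\log_q x-(1-x)\log_q(1-x)$ with $0\log_q0=0$. *)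

theory Defs
  imports "HOL-Analysis.Analysis"
begin

text \<open>Words of length n over F are lists of length n; coordinates are indexed by 0..n-1.\<close>

definition hamming_weight :: "'a::zero list \<Rightarrow> nat" where
  "hamming_weight x = card {i. i < length x \<and> x ! i \<noteq> 0}"

definition relative_weight :: "'a::zero list \<Rightarrow> real" where
  "relative_weight x = real (hamming_weight x) / real (length x)"

definition proj :: "nat set \<Rightarrow> 'a list \<Rightarrow> (nat \<Rightarrow> 'a)" where
  "proj J x = restrict (\<lambda>i. x ! i) J"

text \<open>Balanced code with information length d: a nonempty family I_1..I_s (a list, repetitions
allowed) of d-subsets of the index set, covering each index exactly t times, each projection
mapping C bijectively onto F^{I_j}.\<close>
definition balanced_code :: "nat \<Rightarrow> nat \<Rightarrow> 'a list set \<Rightarrow> bool" where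
  "balanced_code n d C \<longleftrightarrow>
     (\<forall>x\<in>C. length x = n) \<and>
     (\<exists>Is :: nat set list. \<exists>t :: nat.
        Is \<noteq> [] \<and>
        (\<forall>J\<in>set Is. J \<subseteq> {..<n} \<and> card J = d) \<and>
        (\<forall>i<n. card {j. j < length Is \<and> i \<in> Is ! j} = t) \<and>
        (\<forall>J\<in>set Is. bij_betw (proj J) C (PiE J (\<lambda>_. UNIV))))"

definition qentropy :: "real \<Rightarrow> real \<Rightarrow> real" where
  "qentropy q x = x * log q (q - 1)
     - (if x = 0 then 0 else x * log q x)
     - (if x = 1 then 0 else (1 - x) * log q (1 - x))"

end

theory Submission
  imports Defs
begin

(* Fix a probability distribution g on F. Pulled back along the bijection C -> F^(I_j), the
   product distribution on F^(I_j) becomes a probability distribution mu_j on C. Since every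
   coordinate is covered t times, prod_j mu_j(x) = (prod_i g(x_i))^t, and s d = n t; so by AM-GM
   the average mu(x) of the mu_j(x) is at least beta^d whenever prod_i g(x_i) >= beta^n. As mu is
   again a probability distribution on C, at most beta^(-d) codewords can satisfy this. With
   g(0) = 1 - delta and g(v) = delta/(q-1) otherwise, every word of relative weight at most delta
   qualifies for beta = q^(-h_q(delta)), because delta/(q-1) <= 1 - delta. *)

lemma prod_nth_sets_eq_prod_power_multiplicity:
  fixes h :: "nat \<Rightarrow> 'b::comm_monoid_mult" and Is :: "nat set list"
  assumes "\<And>j. j < length Is \<Longrightarrow> Is!j \<subseteq> {..<n}"
  shows "(\<Prod>j<length Is. \<Prod>i\<in>Is!j. h i) = (\<Prod>i<n. h i ^ card {j. j < length Is \<and> i \<in> Is!j})"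
proof -
  have "(\<Prod>j<length Is. \<Prod>i\<in>Is!j. h i) = (\<Prod>j<length Is. \<Prod>i<n. if i \<in> Is!j then h i else 1)"
  proof (rule prod.cong[OF refl])
    fix j assume "j \<in> {..<length Is}"
    then have "Is!j = {..<n} \<inter> {i. i \<in> Is!j}" using assms by auto
    then show "(\<Prod>i\<in>Is!j. h i) = (\<Prod>i<n. if i \<in> Is!j then h i else 1)"
      by (simp add: prod.If_cases)
  qed
  also have "\<dots> = (\<Prod>i<n. \<Prod>j<length Is. if i \<in> Is!j then h i else 1)"
    by (rule prod.swap)
  also have "\<dots> = (\<Prod>i<n. h i ^ card {j. j < length Is \<and> i \<in> Is!j})"
  proof (rule prod.cong[OF refl])
    fix i
    have "{..<length Is} \<inter> {j. i \<in> Is!j} = {j. j < length Is \<and> i \<in> Is!j}" by auto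
    then show "(\<Prod>j<length Is. if i \<in> Is!j then h i else 1) = h i ^ card {j. j < length Is \<and> i \<in> Is!j}"
      by (simp add: prod.If_cases)
  qed
  finally show ?thesis .
qed

lemma prod_exact_cover_eq_power:
  fixes h :: "nat \<Rightarrow> 'b::comm_semiring_1" and Is :: "nat set list"
  assumes "\<And>j. j < length Is \<Longrightarrow> Is!j \<subseteq> {..<n}"
    and "\<And>i. i < n \<Longrightarrow> card {j. j < length Is \<and> i \<in> Is!j} = t"
  shows "(\<Prod>j<length Is. \<Prod>i\<in>Is!j. h i) = (\<Prod>i<n. h i) ^ t"
proof -
  have "(\<Prod>j<length Is. \<Prod>i\<in>Is!j. h i) = (\<Prod>i<n. h i ^ t)"
    using prod_nth_sets_eq_prod_power_multiplicity[OF assms(1)] assms(2) by simp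
  also have "\<dots> = (\<Prod>i<n. h i) ^ t"
    by (rule prod_power_distrib[symmetric])
  finally show ?thesis .
qed

lemma sum_prod_proj_eq_power:
  fixes C :: "('a::finite) list set" and g :: "'a \<Rightarrow> 'b::comm_semiring_1"
  assumes "bij_betw (proj J) C (PiE J (\<lambda>_. UNIV))" and "finite J"
  shows "(\<Sum>x\<in>C. \<Prod>i\<in>J. g (x!i)) = (\<Sum>v\<in>UNIV. g v) ^ card J"
proof -
  have "(\<Sum>x\<in>C. \<Prod>i\<in>J. g (x!i)) = (\<Sum>x\<in>C. \<Prod>i\<in>J. g (proj J x i))"
    unfolding proj_def by (intro sum.cong prod.cong) auto
  also have "\<dots> = (\<Sum>y\<in>PiE J (\<lambda>_. UNIV). \<Prod>i\<in>J. g (y i))"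
    by (rule sum.reindex_bij_betw[OF assms(1)])
  also have "\<dots> = (\<Prod>i\<in>J. \<Sum>v\<in>UNIV. g v)"
    by (rule prod_sum_PiE[symmetric]) (use assms(2) in auto)
  finally show ?thesis by simp
qed

lemma le_mean_if_power_le_prod:
  fixes f :: "nat \<Rightarrow> real"
  assumes "0 \<le> c" "0 < s" "\<And>j. j < s \<Longrightarrow> 0 \<le> f j" "c ^ s \<le> (\<Prod>j<s. f j)"
  shows "c \<le> (\<Sum>j<s. f j) / s"
proof -
  have "c = (c ^ s) powr (1 / s)"
  proof (cases "c = 0")
    case False
    then have "(c ^ s) powr (1 / s) = c powr (real s * (1 / s))"
      using assms by (simp add: powr_realpow[symmetric] powr_powr)
    then show ?thesis using assms False by simp
  qed (use assms in simp)
  also have "\<dots> \<le> (\<Prod>j<s. f j) powr (1 / s)"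
    using assms by (intro powr_mono2) auto
  also have "\<dots> \<le> (\<Sum>j<s. f j / s)"
    using arith_geom_mean[of "{..<s}" f] assms by auto
  finally show ?thesis
    by (simp add: sum_divide_distrib)
qed

lemma balanced_codeE:
  assumes "balanced_code n d C"
  obtains Is t where "Is \<noteq> []"
    and "\<And>j. j < length Is \<Longrightarrow> Is!j \<subseteq> {..<n}" and "\<And>j. j < length Is \<Longrightarrow> card (Is!j) = d"
    and "\<And>i. i < n \<Longrightarrow> card {j. j < length Is \<and> i \<in> Is!j} = t"
    and "\<And>j. j < length Is \<Longrightarrow> bij_betw (proj (Is!j)) C (PiE (Is!j) (\<lambda>_. UNIV))"
proof -
  obtain Is t where "Is \<noteq> []"
    and "\<forall>J\<in>set Is. J \<subseteq> {..<n} \<and> card J = d"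
    and "\<forall>i<n. card {j. j < length Is \<and> i \<in> Is!j} = t"
    and "\<forall>J\<in>set Is. bij_betw (proj J) C (PiE J (\<lambda>_. UNIV))"
    using assms unfolding balanced_code_def by blast
  then show ?thesis
    by (intro that[of Is t]) auto
qed

lemma balanced_code_card_mul_power_le:
  fixes C :: "('a::finite) list set" and g :: "'a \<Rightarrow> real"
  assumes code: "balanced_code n d C" and "S \<subseteq> C"
    and g_nonneg: "\<And>v. 0 \<le> g v" and g_sum: "(\<Sum>v\<in>UNIV. g v) = 1"
    and "0 \<le> \<beta>" and likely: "\<And>x. x \<in> S \<Longrightarrow> \<beta> ^ n \<le> (\<Prod>i<n. g (x!i))"
  shows "real (card S) * \<beta> ^ d \<le> 1"
proof -
  obtain Is t where "Is \<noteq> []"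
    and Is_sub: "\<And>j. j < length Is \<Longrightarrow> Is!j \<subseteq> {..<n}"
    and Is_card: "\<And>j. j < length Is \<Longrightarrow> card (Is!j) = d"
    and cover: "\<And>i. i < n \<Longrightarrow> card {j. j < length Is \<and> i \<in> Is!j} = t"
    and bij: "\<And>j. j < length Is \<Longrightarrow> bij_betw (proj (Is!j)) C (PiE (Is!j) (\<lambda>_. UNIV))"
    using balanced_codeE[OF code] by blast
  define s where "s = length Is"
  define F where "F j x = (\<Prod>i\<in>Is!j. g (x!i))" for j x
  have "s > 0" using \<open>Is \<noteq> []\<close> s_def by simp
  have Is_finite: "finite (Is!j)" if "j < s" for j
    using Is_sub[of j] that finite_subset unfolding s_def by blast
  have "finite C"
    using bij_betw_finite[OF bij[of 0]] Is_finite[of 0] \<open>s > 0\<close> unfolding s_def by (simp add: finite_PiE)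
  have F_nonneg: "0 \<le> F j x" for j x
    unfolding F_def using g_nonneg by (simp add: prod_nonneg)
  have mass: "(\<Sum>x\<in>C. F j x) = 1" if "j < s" for j
    unfolding F_def using sum_prod_proj_eq_power[OF bij Is_finite, where g=g] that g_sum
    unfolding s_def by simp
  have "(\<beta> ^ d) ^ s = (\<beta> ^ n) ^ t"
  proof -
    have "(\<Prod>j<s. \<Prod>i\<in>Is!j. \<beta>) = (\<Prod>j<s. \<beta> ^ d)"
      using Is_card unfolding s_def by simp
    then show ?thesis
      using prod_exact_cover_eq_power[OF Is_sub cover, of "\<lambda>_. \<beta>"] unfolding s_def by simp
  qed
  have mean_ge: "\<beta> ^ d \<le> (\<Sum>j<s. F j x) / s" if "x \<in> S" for x
  proof (rule le_mean_if_power_le_prod)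
    have "(\<beta> ^ d) ^ s \<le> (\<Prod>i<n. g (x!i)) ^ t"
      unfolding \<open>(\<beta> ^ d) ^ s = (\<beta> ^ n) ^ t\<close>
      using likely[OF that] \<open>0 \<le> \<beta>\<close> by (simp add: power_mono)
    also have "\<dots> = (\<Prod>j<s. F j x)"
      unfolding F_def s_def by (rule prod_exact_cover_eq_power[OF Is_sub cover, symmetric])
    finally show "(\<beta> ^ d) ^ s \<le> (\<Prod>j<s. F j x)" .
  qed (use \<open>0 \<le> \<beta>\<close> \<open>s > 0\<close> F_nonneg in auto)
  have "real (card S) * \<beta> ^ d = (\<Sum>x\<in>S. \<beta> ^ d)" by simp
  also have "\<dots> \<le> (\<Sum>x\<in>S. (\<Sum>j<s. F j x) / s)"
    by (intro sum_mono mean_ge)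
  also have "\<dots> \<le> (\<Sum>x\<in>C. (\<Sum>j<s. F j x) / s)"
    using \<open>finite C\<close> \<open>S \<subseteq> C\<close> F_nonneg by (intro sum_mono2) (auto intro!: sum_nonneg divide_nonneg_nonneg)
  also have "\<dots> = (\<Sum>j<s. \<Sum>x\<in>C. F j x) / s"
    by (subst sum.swap) (simp add: sum_divide_distrib)
  also have "\<dots> = 1"
    using mass \<open>s > 0\<close> by simp
  finally show ?thesis .
qed

definition entropy_weight :: "real \<Rightarrow> 'a::{finite,zero} \<Rightarrow> real" where
  "entropy_weight \<delta> v = (if v = 0 then 1 - \<delta> else \<delta> / (real CARD('a) - 1))"

lemma card_ge_2_zero_neq_one: "2 \<le> CARD('a::{finite,zero_neq_one})"
proof -
  have "card {0::'a, 1} \<le> CARD('a)" by (rule card_mono) auto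
  then show ?thesis by simp
qed

lemma entropy_weight_nonneg:
  assumes "0 \<le> \<delta>" "\<delta> \<le> 1"
  shows "0 \<le> entropy_weight \<delta> (v::'a::{finite,zero_neq_one})"
  using assms card_ge_2_zero_neq_one[where 'a='a] by (simp add: entropy_weight_def)

lemma sum_entropy_weight: "(\<Sum>v\<in>UNIV. entropy_weight \<delta> (v::'a::{finite,zero_neq_one})) = 1"
proof -
  define q where "q = real CARD('a)"
  have "q \<ge> 2"
    unfolding q_def using card_ge_2_zero_neq_one[where 'a='a] by simp
  have "(\<Sum>v\<in>UNIV. entropy_weight \<delta> (v::'a)) = entropy_weight \<delta> (0::'a) + (\<Sum>v\<in>UNIV - {0::'a}. entropy_weight \<delta> v)"
    by (rule sum.remove) auto
  also have "(\<Sum>v\<in>UNIV - {0::'a}. entropy_weight \<delta> v) = (\<Sum>v\<in>UNIV - {0::'a}. \<delta> / (q - 1))"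
    by (rule sum.cong) (auto simp: entropy_weight_def q_def)
  also have "\<dots> = (q - 1) * (\<delta> / (q - 1))"
    by (simp add: card_Diff_singleton of_nat_diff q_def)
  finally show ?thesis
    using \<open>q \<ge> 2\<close> by (simp add: entropy_weight_def)
qed

lemma hamming_weight_le_length: "hamming_weight x \<le> length x"
  unfolding hamming_weight_def by (rule order.trans[OF card_mono[of "{..<length x}"]]) auto

lemma hamming_weight_le_of_relative_weight_le:
  "relative_weight x \<le> \<delta> \<Longrightarrow> real (hamming_weight x) \<le> \<delta> * real (length x)"
  by (cases "length x = 0")
    (auto simp: relative_weight_def hamming_weight_def divide_le_eq mult.commute)

lemma prod_entropy_weight:
  "(\<Prod>i<length x. entropy_weight \<delta> (x!i)) =
     (\<delta> / (real CARD('a) - 1)) ^ hamming_weight x * (1 - \<delta>) ^ (length x - hamming_weight x)"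
  for x :: "'a::{finite,zero} list"
proof -
  let ?Z = "{..<length x} \<inter> {i. x!i = 0}" and ?N = "{..<length x} \<inter> - {i. x!i = 0}"
  have "?N = {i. i < length x \<and> x ! i \<noteq> 0}" by auto
  then have N: "card ?N = hamming_weight x"
    unfolding hamming_weight_def by simp
  have "card ?Z + card ?N = length x"
    using card_Un_disjoint[of ?Z ?N] by (simp add: Int_Un_distrib[symmetric] Int_ac)
  then have Z: "card ?Z = length x - hamming_weight x"
    using N by simp
  show ?thesis
    unfolding entropy_weight_def prod.If_cases[OF finite_lessThan] by (simp add: Z N mult.commute)
qed

lemma powr_interpolate_le_power:
  fixes a b \<delta> :: real and w n :: nat
  assumes "0 < a" "a \<le> b" "w \<le> n" "real w \<le> \<delta> * real n"
  shows "(a powr \<delta> * b powr (1 - \<delta>)) ^ n \<le> a ^ w * b ^ (n - w)"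
proof -
  have "0 < b" using assms by linarith
  have "a powr \<delta> * b powr (1 - \<delta>) = b * (a / b) powr \<delta>"
    using \<open>0 < b\<close> by (simp add: powr_divide powr_diff)
  then have "(a powr \<delta> * b powr (1 - \<delta>)) ^ n = b ^ n * (a / b) powr (\<delta> * n)"
    using assms \<open>0 < b\<close> by (simp add: power_mult_distrib powr_realpow[symmetric] powr_powr)
  also have "\<dots> \<le> b ^ n * (a / b) powr (real w)"
    using assms \<open>0 < b\<close> by (intro mult_left_mono powr_mono') auto
  also have "\<dots> = a ^ w * b ^ (n - w)"
  proof -
    have "b ^ n = b ^ w * b ^ (n - w)"
      using \<open>w \<le> n\<close> by (simp add: power_add[symmetric])
    then show ?thesis
      using assms \<open>0 < b\<close> by (simp add: powr_realpow power_divide)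
  qed
  finally show ?thesis .
qed

lemma powr_neg_qentropy:
  assumes "1 < q" "0 < \<delta>" "\<delta> < 1"
  shows "q powr (- qentropy q \<delta>) = (\<delta> / (q - 1)) powr \<delta> * (1 - \<delta>) powr (1 - \<delta>)"
proof -
  have "- qentropy q \<delta> * ln q = \<delta> * ln (\<delta> / (q - 1)) + (1 - \<delta>) * ln (1 - \<delta>)"
    using assms unfolding qentropy_def log_def by (simp add: ln_div field_simps)
  then show ?thesis
    using assms by (simp add: powr_def exp_add[symmetric])
qed

lemma power_le_prod_entropy_weight:
  fixes x :: "'a::{finite,zero_neq_one} list"
  assumes "0 \<le> \<delta>" "\<delta> \<le> 1 - 1 / real CARD('a)" "relative_weight x \<le> \<delta>"
  shows "(real CARD('a) powr (- qentropy (real CARD('a)) \<delta>)) ^ length x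
           \<le> (\<Prod>i<length x. entropy_weight \<delta> (x!i))"
proof (cases "\<delta> = 0")
  case True
  \<comment> \<open>separate, since \<open>0 powr 0 = 0\<close> breaks the interpolation bound\<close>
  then have "hamming_weight x = 0"
    using hamming_weight_le_of_relative_weight_le[OF assms(3)] by simp
  then show ?thesis
    using True by (simp add: prod_entropy_weight qentropy_def)
next
  case False
  define q where "q = real CARD('a)"
  have "q \<ge> 2"
    unfolding q_def using card_ge_2_zero_neq_one[where 'a='a] by simp
  have "\<delta> \<le> 1 - 1 / q" "0 < \<delta>"
    using assms False unfolding q_def by auto
  moreover have "1 / q > 0"
    using \<open>q \<ge> 2\<close> by simp
  ultimately have "\<delta> < 1" and weights: "0 < \<delta> / (q - 1)" "\<delta> / (q - 1) \<le> 1 - \<delta>"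
    using \<open>q \<ge> 2\<close> by (linarith, auto simp: field_simps)
  define a where "a = \<delta> / (q - 1)"
  define b where "b = 1 - \<delta>"
  have "q powr (- qentropy q \<delta>) = a powr \<delta> * b powr (1 - \<delta>)"
    unfolding a_def b_def using \<open>q \<ge> 2\<close> \<open>0 < \<delta>\<close> \<open>\<delta> < 1\<close> by (intro powr_neg_qentropy) auto
  moreover have "(a powr \<delta> * b powr (1 - \<delta>)) ^ length x \<le> a ^ hamming_weight x * b ^ (length x - hamming_weight x)"
    unfolding a_def b_def using weights hamming_weight_le_length
      hamming_weight_le_of_relative_weight_le[OF assms(3)]
    by (intro powr_interpolate_le_power) auto
  ultimately show ?thesis
    unfolding prod_entropy_weight a_def b_def q_def by simp
qed

lemma powr_neg_power:
  fixes q h :: real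
  assumes "0 < q"
  shows "(q powr (- h)) ^ d = inverse (q powr (real d * h))"
proof -
  have "(q powr (- h)) ^ d = (q powr (- h)) powr real d"
    using assms by (simp add: powr_realpow)
  also have "\<dots> = q powr (- (real d * h))"
    unfolding powr_powr by (simp add: mult.commute)
  finally show ?thesis
    by (simp add: powr_minus)
qed

theorem corollary3p4:
  fixes C :: "('a::{finite,field}) list set" and n d :: nat and \<delta> :: real
  assumes "balanced_code n d C"
    and "0 \<le> \<delta>" and "\<delta> \<le> 1 - 1 / real CARD('a)"
  shows "real (card {x\<in>C. relative_weight x \<le> \<delta>})
           \<le> real CARD('a) powr (real d * qentropy (real CARD('a)) \<delta>)"
proof -
  define q where "q = real CARD('a)"
  define \<beta> where "\<beta> = q powr (- qentropy q \<delta>)"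
  have "q \<ge> 2"
    unfolding q_def using card_ge_2_zero_neq_one[where 'a='a] by simp
  have "\<delta> \<le> 1"
    using assms(3) \<open>q \<ge> 2\<close> unfolding q_def[symmetric] by (smt (verit) divide_pos_pos)
  have "\<beta> ^ n \<le> (\<Prod>i<n. entropy_weight \<delta> (x!i))" if "x \<in> {x\<in>C. relative_weight x \<le> \<delta>}" for x
  proof -
    have "length x = n"
      using assms(1) that unfolding balanced_code_def by blast
    then show ?thesis
      using power_le_prod_entropy_weight[OF assms(2,3), of x] that unfolding \<beta>_def q_def by simp
  qed
  then have "real (card {x\<in>C. relative_weight x \<le> \<delta>}) * \<beta> ^ d \<le> 1"
    using assms(2) \<open>\<delta> \<le> 1\<close> \<open>q \<ge> 2\<close> unfolding \<beta>_def
    by (intro balanced_code_card_mul_power_le[OF assms(1), where g = "entropy_weight \<delta>"]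
        entropy_weight_nonneg sum_entropy_weight) auto
  moreover have "\<beta> ^ d = inverse (q powr (real d * qentropy q \<delta>))"
    unfolding \<beta>_def using \<open>q \<ge> 2\<close> by (simp add: powr_neg_power)
  ultimately show ?thesis
    using \<open>q \<ge> 2\<close> unfolding q_def by (simp add: field_simps)
qed

end
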